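(* Let $\mathcal F=(\mathcal A,U,\varphi)$ be a sequential formalism, let $\mathcal S,\mathcal S'\subseteq\mathcal A$, and let $H$ be a refinement from $\mathcal S$ to $\mathcal S'$. Assume: (A1) $\mathcal S$ is algebraically stable through $H$; (A2) every algebraically consistent network over $\mathcal S'$ is satisfiable. Then every algebraically consistent network over $\mathcal S$ is satisfiable. If, in addition, $\mathcal S$ is a $\Rsh$-closed $\diamond\cap$-closed subset, then $\mathcal S$ is algebraically tractable.
   Context: A finite non-associative algebra is a tuple $(\mathcal A,\cup,\neg,\emptyset,\mathcal B,\diamond,\overline{\cdot},e)$ where $(\mathcal A,\cup,\neg,\emptyset,\mathcal B)$ is a finite Boolean algebra (with $x\cap y=\neg(\neg x\cup\neg y)$) and for all $x,y,z$: $\overline{\overline x}=x$, $\overline{x\cup y}=\overline x\cup\overline y$, $\overline{x\diamond y}=\overline y\diamond\overline x$, $e\diamond x=x\diamond e=x$, $x\diamond(y\cup z)=(x\diamond y)\cup(x\diamond z)$, $(x\diamond y)\cap\overline z=\emptyset\iff(y\diamond z)\cap\overline x=\emptyset$. $\mathcal B$ is the universal relation; $r\subseteq r'$ means $r\cup r'=r'$; atoms are basic relations. A projection operator from $\mathcal A$ to $\mathcal A'$ is a map $\Rsh$ with $\Rsh(r\cup r')=\Rsh r\cup\Rsh r'$, $\Rsh\overline r=\overline{\Rsh r}$. A finite multi-algebra is a product $\mathcal A_1\times\cdots\times\mathcal A_m$ of finite non-associative algebras with projection operators $\Rsh_i^j:\mathcal A_i\to\mathcal A_j$ for all distinct $i,j$.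 Relations $R=(R_1,\dots,R_m)$; basic if all $R_i$ are atoms; universal relation $\mathcal B=(\mathcal B_1,\dots,\mathcal B_m)$; $\subseteq,\diamond,\cap,\cup,\overline{\cdot}$ componentwise; $B\in R$ means $B$ basic, $B\subseteq R$. $R$ is closed under projection if $R_j\subseteq\Rsh_i^jR_i$ for all distinct $i,j$; the projection closure $\Rsh R$ is obtained by repeatedly replacing $R_j$ by $R_j\cap\Rsh_i^jR_i$ until a fixed point. A sequential formalism is $(\mathcal A,U,\varphi)$ with $\mathcal A$ a finite multi-algebra, $U\ne\emptyset$, $\varphi:\mathcal A\to 2^{U\times U}$ with $\varphi(\Rsh R)=\varphi(R)$, $\varphi(\overline R)=\varphi(R)^{-1}$, $\varphi((\emptyset,\dots,\emptyset))=\emptyset$, $\varphi(R\diamond R')\supseteq(\varphi(R)\circ\varphi(R'))\cap\varphi(\mathcal B)$, $\varphi(R\cap R')=\varphi(R)\cap\varphi(R')$, $\varphi(R)=\bigcup_{B\in R}\varphi(B)$. A network over $\mathcal S\subseteq\mathcal A$ is a finite set $E$ of variables with $N^{xy}\in\mathcal S$ for all distinct $x,y\in E$, $N^{yx}=\overline{N^{xy}}$; slices $N_i^{xy}=(N^{xy})_i$. A solution is $(u_x)_{x\in E}\subseteq U$ with $(u_x,u_y)\in\varphi(N^{xy})$ for all distinct $x,y$; $N$ is satisfiable if it has one. $N$ is trivially inconsistent if some $N_i^{xy}=\emptyset$; closed under composition if $N^{xz}\subseteq N^{xy}\diamond N^{yz}$ for all distinct $x,y,z$; closed under projection if every $N^{xy}$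 is; algebraically closed if both; algebraically consistent if algebraically closed and not trivially inconsistent. The algebraic closure of $N$ is obtained by repeatedly applying $N^{xz}\leftarrow\Rsh N^{xz}$ and $N^{xz}\leftarrow N^{xz}\cap(N^{xy}\diamond N^{yz})$ until a fixed point. A subset $\mathcal S$ is $\diamond\cap$-closed if $(R\diamond R')\cap R''\in\mathcal S$ for all $R,R',R''\in\mathcal S$; $\Rsh$-closed if $\Rsh R\in\mathcal S$ for all $R\in\mathcal S$; algebraically tractable if every network over $\mathcal S$ is satisfiable iff its algebraic closure is not trivially inconsistent. A refinement from $\mathcal S$ to $\mathcal S'$ is a function $H:\mathcal S\to\mathcal S'$ with $H(R)\subseteq R$ and $H(R)$ not trivially inconsistent (no empty component) whenever $R$ is not. $H(N)$ denotes the network obtained by replacing each $N^{xy}$ by $H(N^{xy})$. $\mathcal S$ is algebraically stable through $H$ if $H(N)$ is algebraically consistent for every algebraically consistent network $N$ over $\mathcal S$. *)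

theory Defs
  imports Main
begin

text \<open>The fields: carrier, union (join), complement (neg),
empty relation (bot), universal relation (top = B), composition (comp),
converse (conv) and identity (e).\<close>

record 'r nalg =
  carrier :: "'r set"
  join :: "'r \<Rightarrow> 'r \<Rightarrow> 'r"
  neg :: "'r \<Rightarrow> 'r"
  bot :: "'r"
  top :: "'r"
  comp :: "'r \<Rightarrow> 'r \<Rightarrow> 'r"
  conv :: "'r \<Rightarrow> 'r"
  unit :: "'r"

definition meet :: "'r nalg \<Rightarrow> 'r \<Rightarrow> 'r \<Rightarrow> 'r" where
  "meet A x y = neg A (join A (neg A x) (neg A y))"

definition le :: "'r nalg \<Rightarrow> 'r \<Rightarrow> 'r \<Rightarrow> bool" where
  "le A x y \<longleftrightarrow> join A x y = y"

definition is_atom :: "'r nalg \<Rightarrow> 'r \<Rightarrow> bool" where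
  "is_atom A x \<longleftrightarrow> x \<in> carrier A \<and> x \<noteq> bot A \<and>
     (\<forall>y \<in> carrier A. le A y x \<longrightarrow> y = bot A \<or> y = x)"

definition boolean_alg :: "'r nalg \<Rightarrow> bool" where
  "boolean_alg A \<longleftrightarrow>
     finite (carrier A) \<and> bot A \<in> carrier A \<and> top A \<in> carrier A \<and>
     (\<forall>x \<in> carrier A. \<forall>y \<in> carrier A. join A x y \<in> carrier A) \<and>
     (\<forall>x \<in> carrier A. neg A x \<in> carrier A) \<and>
     (\<forall>x \<in> carrier A. \<forall>y \<in> carrier A. join A x y = join A y x) \<and>
     (\<forall>x \<in> carrier A. \<forall>y \<in> carrier A. meet A x y = meet A y x) \<and>
     (\<forall>x \<in> carrier A. \<forall>y \<in> carrier A. \<forall>z \<in> carrier A.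
        join A x (join A y z) = join A (join A x y) z) \<and>
     (\<forall>x \<in> carrier A. \<forall>y \<in> carrier A. \<forall>z \<in> carrier A.
        meet A x (meet A y z) = meet A (meet A x y) z) \<and>
     (\<forall>x \<in> carrier A. \<forall>y \<in> carrier A. join A x (meet A x y) = x) \<and>
     (\<forall>x \<in> carrier A. \<forall>y \<in> carrier A. meet A x (join A x y) = x) \<and>
     (\<forall>x \<in> carrier A. \<forall>y \<in> carrier A. \<forall>z \<in> carrier A.
        join A x (meet A y z) = meet A (join A x y) (join A x z)) \<and>
     (\<forall>x \<in> carrier A. \<forall>y \<in> carrier A. \<forall>z \<in> carrier A.
        meet A x (join A y z) = join A (meet A x y) (meet A x z)) \<and>
     (\<forall>x \<in> carrier A. join A x (neg A x) = top A) \<and>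
     (\<forall>x \<in> carrier A. meet A x (neg A x) = bot A)"

definition nonassoc_alg :: "'r nalg \<Rightarrow> bool" where
  "nonassoc_alg A \<longleftrightarrow> boolean_alg A \<and> unit A \<in> carrier A \<and>
     (\<forall>x \<in> carrier A. \<forall>y \<in> carrier A. comp A x y \<in> carrier A) \<and>
     (\<forall>x \<in> carrier A. conv A x \<in> carrier A) \<and>
     (\<forall>x \<in> carrier A. conv A (conv A x) = x) \<and>
     (\<forall>x \<in> carrier A. \<forall>y \<in> carrier A. conv A (join A x y) = join A (conv A x) (conv A y)) \<and>
     (\<forall>x \<in> carrier A. \<forall>y \<in> carrier A. conv A (comp A x y) = comp A (conv A y) (conv A x)) \<and>
     (\<forall>x \<in> carrier A. comp A (unit A) x = x \<and> comp A x (unit A) = x) \<and>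
     (\<forall>x \<in> carrier A. \<forall>y \<in> carrier A. \<forall>z \<in> carrier A.
        comp A x (join A y z) = join A (comp A x y) (comp A x z)) \<and>
     (\<forall>x \<in> carrier A. \<forall>y \<in> carrier A. \<forall>z \<in> carrier A.
        meet A (comp A x y) (conv A z) = bot A \<longleftrightarrow> meet A (comp A y z) (conv A x) = bot A)"

text \<open>A multi-algebra: the list of component algebras A_0..A_{m-1} and the
projection operators proj i j : A_i \<rightarrow> A_j.  Relations are lists of
length m.\<close>

record 'r malg =
  algs :: "'r nalg list"
  proj :: "nat \<Rightarrow> nat \<Rightarrow> 'r \<Rightarrow> 'r"

abbreviation dim :: "'r malg \<Rightarrow> nat" where
  "dim M \<equiv> length (algs M)"

abbreviation alg :: "'r malg \<Rightarrow> nat \<Rightarrow> 'r nalg" where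
  "alg M i \<equiv> algs M ! i"

definition multi_alg :: "'r malg \<Rightarrow> bool" where
  "multi_alg M \<longleftrightarrow>
     (\<forall>i < dim M. nonassoc_alg (alg M i)) \<and>
     (\<forall>i < dim M. \<forall>j < dim M. i \<noteq> j \<longrightarrow>
        (\<forall>x \<in> carrier (alg M i). proj M i j x \<in> carrier (alg M j)) \<and>
        (\<forall>x \<in> carrier (alg M i). \<forall>y \<in> carrier (alg M i).
            proj M i j (join (alg M i) x y) = join (alg M j) (proj M i j x) (proj M i j y)) \<and>
        (\<forall>x \<in> carrier (alg M i).
            proj M i j (conv (alg M i) x) = conv (alg M j) (proj M i j x)))"

definition rels :: "'r malg \<Rightarrow> 'r list set" where
  "rels M = {R. length R = dim M \<and> (\<forall>i < dim M. R ! i \<in> carrier (alg M i))}"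

definition rcomp :: "'r malg \<Rightarrow> 'r list \<Rightarrow> 'r list \<Rightarrow> 'r list" where
  "rcomp M R R' = map (\<lambda>i. comp (alg M i) (R ! i) (R' ! i)) [0..<dim M]"

definition rinter :: "'r malg \<Rightarrow> 'r list \<Rightarrow> 'r list \<Rightarrow> 'r list" where
  "rinter M R R' = map (\<lambda>i. meet (alg M i) (R ! i) (R' ! i)) [0..<dim M]"

definition rconv :: "'r malg \<Rightarrow> 'r list \<Rightarrow> 'r list" where
  "rconv M R = map (\<lambda>i. conv (alg M i) (R ! i)) [0..<dim M]"

definition runiv :: "'r malg \<Rightarrow> 'r list" where
  "runiv M = map (\<lambda>i. top (alg M i)) [0..<dim M]"

definition rempty :: "'r malg \<Rightarrow> 'r list" where
  "rempty M = map (\<lambda>i. bot (alg M i)) [0..<dim M]"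

definition rsubseteq :: "'r malg \<Rightarrow> 'r list \<Rightarrow> 'r list \<Rightarrow> bool" where
  "rsubseteq M R R' \<longleftrightarrow> (\<forall>i < dim M. le (alg M i) (R ! i) (R' ! i))"

definition rbasic :: "'r malg \<Rightarrow> 'r list \<Rightarrow> bool" where
  "rbasic M R \<longleftrightarrow> R \<in> rels M \<and> (\<forall>i < dim M. is_atom (alg M i) (R ! i))"

definition rtriv :: "'r malg \<Rightarrow> 'r list \<Rightarrow> bool" where
  "rtriv M R \<longleftrightarrow> (\<exists>i < dim M. R ! i = bot (alg M i))"

definition proj_closed :: "'r malg \<Rightarrow> 'r list \<Rightarrow> bool" where
  "proj_closed M R \<longleftrightarrow>
     (\<forall>i < dim M. \<forall>j < dim M. i \<noteq> j \<longrightarrow> le (alg M j) (R ! j) (proj M i j (R ! i)))"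

definition proj_step :: "'r malg \<Rightarrow> 'r list \<Rightarrow> 'r list \<Rightarrow> bool" where
  "proj_step M R R' \<longleftrightarrow> (\<exists>i < dim M. \<exists>j < dim M. i \<noteq> j \<and>
      R' = R[j := meet (alg M j) (R ! j) (proj M i j (R ! i))])"

definition proj_closure :: "'r malg \<Rightarrow> 'r list \<Rightarrow> 'r list \<Rightarrow> bool" where
  "proj_closure M R R' \<longleftrightarrow> (proj_step M)\<^sup>*\<^sup>* R R' \<and> proj_closed M R'"

definition seq_formalism :: "'r malg \<Rightarrow> 'u set \<Rightarrow> ('r list \<Rightarrow> ('u \<times> 'u) set) \<Rightarrow> bool" where
  "seq_formalism M U \<phi> \<longleftrightarrow> multi_alg M \<and> U \<noteq> {} \<and>
     (\<forall>R \<in> rels M. \<phi> R \<subseteq> U \<times> U) \<and>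
     (\<forall>R \<in> rels M. \<forall>R'. proj_closure M R R' \<longrightarrow> \<phi> R' = \<phi> R) \<and>
     (\<forall>R \<in> rels M. \<phi> (rconv M R) = (\<phi> R)\<inverse>) \<and>
     \<phi> (rempty M) = {} \<and>
     (\<forall>R \<in> rels M. \<forall>R' \<in> rels M. (\<phi> R O \<phi> R') \<inter> \<phi> (runiv M) \<subseteq> \<phi> (rcomp M R R')) \<and>
     (\<forall>R \<in> rels M. \<forall>R' \<in> rels M. \<phi> (rinter M R R') = \<phi> R \<inter> \<phi> R') \<and>
     (\<forall>R \<in> rels M. \<phi> R = (\<Union>B \<in> {B. rbasic M B \<and> rsubseteq M B R}. \<phi> B))"

definition network_over :: "'r malg \<Rightarrow> 'r list set \<Rightarrow> 'v set \<Rightarrow> ('v \<Rightarrow> 'v \<Rightarrow> 'r list) \<Rightarrow> bool" where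
  "network_over M S E N \<longleftrightarrow> finite E \<and>
     (\<forall>x \<in> E. \<forall>y \<in> E. x \<noteq> y \<longrightarrow> N x y \<in> S \<and> N y x = rconv M (N x y))"

definition network :: "'r malg \<Rightarrow> 'v set \<Rightarrow> ('v \<Rightarrow> 'v \<Rightarrow> 'r list) \<Rightarrow> bool" where
  "network M E N \<longleftrightarrow> network_over M (rels M) E N"

definition solution :: "('r list \<Rightarrow> ('u \<times> 'u) set) \<Rightarrow> 'u set \<Rightarrow> 'v set
    \<Rightarrow> ('v \<Rightarrow> 'v \<Rightarrow> 'r list) \<Rightarrow> ('v \<Rightarrow> 'u) \<Rightarrow> bool" where
  "solution \<phi> U E N u \<longleftrightarrow> (\<forall>x \<in> E. u x \<in> U) \<and>
     (\<forall>x \<in> E. \<forall>y \<in> E. x \<noteq> y \<longrightarrow> (u x, u y) \<in> \<phi> (N x y))"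

definition satisfiable :: "('r list \<Rightarrow> ('u \<times> 'u) set) \<Rightarrow> 'u set \<Rightarrow> 'v set
    \<Rightarrow> ('v \<Rightarrow> 'v \<Rightarrow> 'r list) \<Rightarrow> bool" where
  "satisfiable \<phi> U E N \<longleftrightarrow> (\<exists>u. solution \<phi> U E N u)"

definition triv_incons :: "'r malg \<Rightarrow> 'v set \<Rightarrow> ('v \<Rightarrow> 'v \<Rightarrow> 'r list) \<Rightarrow> bool" where
  "triv_incons M E N \<longleftrightarrow> (\<exists>x \<in> E. \<exists>y \<in> E. x \<noteq> y \<and> rtriv M (N x y))"

definition comp_closed_net :: "'r malg \<Rightarrow> 'v set \<Rightarrow> ('v \<Rightarrow> 'v \<Rightarrow> 'r list) \<Rightarrow> bool" where
  "comp_closed_net M E N \<longleftrightarrow> (\<forall>x \<in> E. \<forall>y \<in> E. \<forall>z \<in> E.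
     x \<noteq> y \<and> y \<noteq> z \<and> x \<noteq> z \<longrightarrow> rsubseteq M (N x z) (rcomp M (N x y) (N y z)))"

definition proj_closed_net :: "'r malg \<Rightarrow> 'v set \<Rightarrow> ('v \<Rightarrow> 'v \<Rightarrow> 'r list) \<Rightarrow> bool" where
  "proj_closed_net M E N \<longleftrightarrow> (\<forall>x \<in> E. \<forall>y \<in> E. x \<noteq> y \<longrightarrow> proj_closed M (N x y))"

definition alg_closed :: "'r malg \<Rightarrow> 'v set \<Rightarrow> ('v \<Rightarrow> 'v \<Rightarrow> 'r list) \<Rightarrow> bool" where
  "alg_closed M E N \<longleftrightarrow> comp_closed_net M E N \<and> proj_closed_net M E N"

definition alg_consistent :: "'r malg \<Rightarrow> 'v set \<Rightarrow> ('v \<Rightarrow> 'v \<Rightarrow> 'r list) \<Rightarrow> bool" where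
  "alg_consistent M E N \<longleftrightarrow> network M E N \<and> alg_closed M E N \<and> \<not> triv_incons M E N"

definition upd_net :: "'r malg \<Rightarrow> ('v \<Rightarrow> 'v \<Rightarrow> 'r list) \<Rightarrow> 'v \<Rightarrow> 'v \<Rightarrow> 'r list
    \<Rightarrow> ('v \<Rightarrow> 'v \<Rightarrow> 'r list)" where
  "upd_net M N x z R = (\<lambda>a b. if a = x \<and> b = z then R
                          else if a = z \<and> b = x then rconv M R else N a b)"

definition alg_step :: "'r malg \<Rightarrow> 'v set \<Rightarrow> ('v \<Rightarrow> 'v \<Rightarrow> 'r list)
    \<Rightarrow> ('v \<Rightarrow> 'v \<Rightarrow> 'r list) \<Rightarrow> bool" where
  "alg_step M E N N' \<longleftrightarrow>
     (\<exists>x \<in> E. \<exists>z \<in> E. x \<noteq> z \<and>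
        (\<exists>R. proj_closure M (N x z) R \<and> N' = upd_net M N x z R)) \<or>
     (\<exists>x \<in> E. \<exists>y \<in> E. \<exists>z \<in> E. x \<noteq> y \<and> y \<noteq> z \<and> x \<noteq> z \<and>
        N' = upd_net M N x z (rinter M (N x z) (rcomp M (N x y) (N y z))))"

definition alg_closure :: "'r malg \<Rightarrow> 'v set \<Rightarrow> ('v \<Rightarrow> 'v \<Rightarrow> 'r list)
    \<Rightarrow> ('v \<Rightarrow> 'v \<Rightarrow> 'r list) \<Rightarrow> bool" where
  "alg_closure M E N N' \<longleftrightarrow> (alg_step M E)\<^sup>*\<^sup>* N N' \<and> alg_closed M E N'"

definition compinter_closed :: "'r malg \<Rightarrow> 'r list set \<Rightarrow> bool" where
  "compinter_closed M S \<longleftrightarrow>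
     (\<forall>R \<in> S. \<forall>R' \<in> S. \<forall>R'' \<in> S. rinter M (rcomp M R R') R'' \<in> S)"

definition projection_closed_set :: "'r malg \<Rightarrow> 'r list set \<Rightarrow> bool" where
  "projection_closed_set M S \<longleftrightarrow> (\<forall>R \<in> S. \<forall>R'. proj_closure M R R' \<longrightarrow> R' \<in> S)"

definition alg_tractable :: "'r malg \<Rightarrow> 'u set \<Rightarrow> ('r list \<Rightarrow> ('u \<times> 'u) set)
    \<Rightarrow> 'r list set \<Rightarrow> 'v itself \<Rightarrow> bool" where
  "alg_tractable M U \<phi> S (_ :: 'v itself) \<longleftrightarrow>
     (\<forall>(E :: 'v set) N. network_over M S E N \<longrightarrow>
        (satisfiable \<phi> U E N \<longleftrightarrow> (\<forall>N'. alg_closure M E N N' \<longrightarrow> \<not> triv_incons M E N')))"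

definition refinement :: "'r malg \<Rightarrow> 'r list set \<Rightarrow> 'r list set \<Rightarrow> ('r list \<Rightarrow> 'r list) \<Rightarrow> bool" where
  "refinement M S S' H \<longleftrightarrow> (\<forall>R \<in> S. H R \<in> S' \<and> rsubseteq M (H R) R \<and>
      (\<not> rtriv M R \<longrightarrow> \<not> rtriv M (H R)))"

definition apply_ref :: "('r list \<Rightarrow> 'r list) \<Rightarrow> ('v \<Rightarrow> 'v \<Rightarrow> 'r list) \<Rightarrow> ('v \<Rightarrow> 'v \<Rightarrow> 'r list)" where
  "apply_ref H N = (\<lambda>x y. H (N x y))"

definition alg_stable :: "'r malg \<Rightarrow> 'r list set \<Rightarrow> ('r list \<Rightarrow> 'r list) \<Rightarrow> 'v itself \<Rightarrow> bool" where
  "alg_stable M S H (_ :: 'v itself) \<longleftrightarrow>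
     (\<forall>(E :: 'v set) N. network_over M S E N \<and> alg_consistent M E N \<longrightarrow>
        alg_consistent M E (apply_ref H N))"

end

theory Submission
  imports Defs
begin

(* Under (A1) an algebraically consistent network N over S is refined to an algebraically
   consistent network H(N) over S', which is satisfiable by (A2); as H only shrinks constraints
   and phi is monotone, every solution of H(N) solves N.
   For tractability, the algebraic closure steps preserve the set of solutions (the projection
   step by invariance of phi under projection closure, the composition step by the weak
   composition axiom), stay inside S when S is closed under both operations, and terminate
   because each step strictly shrinks a constraint of a finite algebra. A closure that is not
   trivially inconsistent is thus an algebraically consistent network over S with the same
   solutions as N. *)

lemma rtranclp_final_exists_by_measure:
  fixes f :: "'a \<Rightarrow> nat"
  assumes "P x"
    and step: "\<And>x. P x \<Longrightarrow> \<not> Q x \<Longrightarrow> \<exists>y. r x y \<and> P y \<and> f y < f x"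
  shows "\<exists>y. r\<^sup>*\<^sup>* x y \<and> P y \<and> Q y"
  using \<open>P x\<close>
proof (induction "f x" arbitrary: x rule: less_induct)
  case less
  show ?case
  proof (cases "Q x")
    case True
    with less.prems show ?thesis by blast
  next
    case False
    then obtain y where "r x y" "P y" "f y < f x"
      using step less.prems by blast
    moreover from less.hyps[OF \<open>f y < f x\<close> \<open>P y\<close>]
    obtain z where "r\<^sup>*\<^sup>* y z" "P z" "Q z" by blast
    ultimately show ?thesis by (meson converse_rtranclp_into_rtranclp)
  qed
qed

definition down_set :: "'r nalg \<Rightarrow> 'r \<Rightarrow> 'r set" where
  "down_set A x = {c \<in> carrier A. le A c x}"

context
  fixes A :: "'r nalg"
  assumes BA: "boolean_alg A"
begin

lemma ba_finite: "finite (carrier A)"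
  and ba_top_closed: "nalg.top A \<in> carrier A"
  and ba_join_closed: "x \<in> carrier A \<Longrightarrow> y \<in> carrier A \<Longrightarrow> join A x y \<in> carrier A"
  and ba_neg_closed: "x \<in> carrier A \<Longrightarrow> neg A x \<in> carrier A"
  and ba_join_commute: "x \<in> carrier A \<Longrightarrow> y \<in> carrier A \<Longrightarrow> join A x y = join A y x"
  and ba_meet_commute: "x \<in> carrier A \<Longrightarrow> y \<in> carrier A \<Longrightarrow> meet A x y = meet A y x"
  and ba_join_assoc: "x \<in> carrier A \<Longrightarrow> y \<in> carrier A \<Longrightarrow> z \<in> carrier A \<Longrightarrow>
    join A x (join A y z) = join A (join A x y) z"
  and ba_meet_assoc: "x \<in> carrier A \<Longrightarrow> y \<in> carrier A \<Longrightarrow> z \<in> carrier A \<Longrightarrow>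
    meet A x (meet A y z) = meet A (meet A x y) z"
  and ba_join_meet_absorb: "x \<in> carrier A \<Longrightarrow> y \<in> carrier A \<Longrightarrow> join A x (meet A x y) = x"
  and ba_meet_join_absorb: "x \<in> carrier A \<Longrightarrow> y \<in> carrier A \<Longrightarrow> meet A x (join A x y) = x"
  and ba_join_neg: "x \<in> carrier A \<Longrightarrow> join A x (neg A x) = nalg.top A"
  and ba_meet_neg: "x \<in> carrier A \<Longrightarrow> meet A x (neg A x) = nalg.bot A"
  using BA unfolding boolean_alg_def by metis+

lemma ba_meet_closed: "x \<in> carrier A \<Longrightarrow> y \<in> carrier A \<Longrightarrow> meet A x y \<in> carrier A"
  unfolding meet_def by (simp add: ba_join_closed ba_neg_closed)

lemma ba_le_iff_meet:
  assumes "x \<in> carrier A" "y \<in> carrier A"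
  shows "le A x y \<longleftrightarrow> meet A x y = x"
proof
  assume "le A x y"
  then show "meet A x y = x"
    using ba_meet_join_absorb[OF assms] unfolding le_def by simp
next
  assume "meet A x y = x"
  then have "join A y x = y"
    using ba_join_meet_absorb[OF assms(2,1)] ba_meet_commute[OF assms] by simp
  then show "le A x y"
    unfolding le_def using ba_join_commute[OF assms] by simp
qed

lemma ba_le_refl: "x \<in> carrier A \<Longrightarrow> le A x x"
  by (metis ba_le_iff_meet ba_join_meet_absorb ba_meet_join_absorb ba_meet_closed)

lemma ba_le_trans:
  assumes "x \<in> carrier A" "y \<in> carrier A" "z \<in> carrier A" "le A x y" "le A y z"
  shows "le A x z"
  using assms ba_join_assoc[of x y z] unfolding le_def by simp

lemma ba_le_antisym:
  "x \<in> carrier A \<Longrightarrow> y \<in> carrier A \<Longrightarrow> le A x y \<Longrightarrow> le A y x \<Longrightarrow> x = y"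
  unfolding le_def by (metis ba_join_commute)

lemma ba_meet_le1: "x \<in> carrier A \<Longrightarrow> y \<in> carrier A \<Longrightarrow> le A (meet A x y) x"
  unfolding le_def by (simp add: ba_join_commute ba_join_meet_absorb ba_meet_closed)

lemma ba_meet_le2: "x \<in> carrier A \<Longrightarrow> y \<in> carrier A \<Longrightarrow> le A (meet A x y) y"
  using ba_meet_le1 ba_meet_commute by metis

lemma ba_meet_greatest:
  assumes "x \<in> carrier A" "y \<in> carrier A" "z \<in> carrier A" "le A z x" "le A z y"
  shows "le A z (meet A x y)"
  using assms ba_meet_assoc[of z x y] by (simp add: ba_le_iff_meet ba_meet_closed)

lemma ba_le_top: "x \<in> carrier A \<Longrightarrow> le A x (nalg.top A)"
  by (metis ba_le_iff_meet ba_join_neg ba_meet_join_absorb ba_neg_closed ba_top_closed)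

lemma ba_le_bot_iff: "x \<in> carrier A \<Longrightarrow> le A x (nalg.bot A) \<longleftrightarrow> x = nalg.bot A"
  unfolding le_def by (metis ba_join_meet_absorb ba_meet_neg ba_neg_closed)

lemma ba_down_set_mono: "x \<in> carrier A \<Longrightarrow> y \<in> carrier A \<Longrightarrow> le A x y \<Longrightarrow> down_set A x \<subseteq> down_set A y"
  unfolding down_set_def using ba_le_trans by blast

lemma ba_card_down_set_mono:
  "x \<in> carrier A \<Longrightarrow> y \<in> carrier A \<Longrightarrow> le A x y \<Longrightarrow> card (down_set A x) \<le> card (down_set A y)"
  using ba_finite by (intro card_mono ba_down_set_mono) (simp_all add: down_set_def)

lemma ba_card_down_set_strict_mono:
  assumes "x \<in> carrier A" "y \<in> carrier A" "le A x y" "x \<noteq> y"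
  shows "card (down_set A x) < card (down_set A y)"
proof (rule psubset_card_mono)
  show "finite (down_set A y)"
    using ba_finite unfolding down_set_def by simp
  have "y \<in> down_set A y" "y \<notin> down_set A x"
    using assms ba_le_refl ba_le_antisym unfolding down_set_def by blast+
  then show "down_set A x \<subset> down_set A y"
    using ba_down_set_mono[OF assms(1-3)] by blast
qed

end

context
  fixes A :: "'r nalg"
  assumes NA: "nonassoc_alg A"
begin

lemma na_boolean_alg: "boolean_alg A"
  and na_comp_closed: "x \<in> carrier A \<Longrightarrow> y \<in> carrier A \<Longrightarrow> comp A x y \<in> carrier A"
  and na_conv_closed: "x \<in> carrier A \<Longrightarrow> conv A x \<in> carrier A"
  and na_conv_conv: "x \<in> carrier A \<Longrightarrow> conv A (conv A x) = x"
  and na_conv_join: "x \<in> carrier A \<Longrightarrow> y \<in> carrier A \<Longrightarrow>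
    conv A (join A x y) = join A (conv A x) (conv A y)"
  and na_conv_comp: "x \<in> carrier A \<Longrightarrow> y \<in> carrier A \<Longrightarrow>
    conv A (comp A x y) = comp A (conv A y) (conv A x)"
  using NA unfolding nonassoc_alg_def by metis+

lemma na_conv_mono: "x \<in> carrier A \<Longrightarrow> y \<in> carrier A \<Longrightarrow> le A x y \<Longrightarrow> le A (conv A x) (conv A y)"
  unfolding le_def by (metis na_conv_join)

(* conv is a monotone involution, hence an order automorphism, and these preserve meets. *)
lemma na_conv_meet:
  assumes x: "x \<in> carrier A" and y: "y \<in> carrier A"
  shows "conv A (meet A x y) = meet A (conv A x) (conv A y)"
proof -
  note BA = na_boolean_alg
  have cx: "conv A x \<in> carrier A" and cy: "conv A y \<in> carrier A"
    using x y by (simp_all add: na_conv_closed)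
  have m: "meet A x y \<in> carrier A" and cm: "meet A (conv A x) (conv A y) \<in> carrier A"
    using x y cx cy by (simp_all add: ba_meet_closed[OF BA])
  have lower: "le A (conv A (meet A x y)) (meet A (conv A x) (conv A y))"
    using x y m cx cy
    by (simp add: ba_meet_greatest[OF BA] na_conv_mono ba_meet_le1[OF BA] ba_meet_le2[OF BA]
        na_conv_closed)
  have "le A (conv A (meet A (conv A x) (conv A y))) (meet A x y)"
    using ba_meet_greatest[OF BA x y na_conv_closed[OF cm]]
      na_conv_mono[OF cm cx ba_meet_le1[OF BA cx cy]]
      na_conv_mono[OF cm cy ba_meet_le2[OF BA cx cy]]
    by (simp add: x y na_conv_conv)
  then have upper: "le A (meet A (conv A x) (conv A y)) (conv A (meet A x y))"
    using na_conv_mono[OF na_conv_closed[OF cm] m] by (simp add: cm na_conv_conv)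
  show ?thesis
    using ba_le_antisym[OF BA _ cm lower upper] by (simp add: m na_conv_closed)
qed

end

lemma relsI: "length R = dim M \<Longrightarrow> (\<And>i. i < dim M \<Longrightarrow> R ! i \<in> carrier (alg M i)) \<Longrightarrow> R \<in> rels M"
  and relsD: "R \<in> rels M \<Longrightarrow> length R = dim M" "R \<in> rels M \<Longrightarrow> i < dim M \<Longrightarrow> R ! i \<in> carrier (alg M i)"
  unfolding rels_def by blast+

lemma rels_eqI: "R \<in> rels M \<Longrightarrow> R' \<in> rels M \<Longrightarrow> (\<And>i. i < dim M \<Longrightarrow> R ! i = R' ! i) \<Longrightarrow> R = R'"
  by (metis nth_equalityI relsD(1))

lemma rinter_nth [simp]: "i < dim M \<Longrightarrow> rinter M R R' ! i = meet (alg M i) (R ! i) (R' ! i)"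
  and rcomp_nth [simp]: "i < dim M \<Longrightarrow> rcomp M R R' ! i = comp (alg M i) (R ! i) (R' ! i)"
  and rconv_nth [simp]: "i < dim M \<Longrightarrow> rconv M R ! i = conv (alg M i) (R ! i)"
  and runiv_nth [simp]: "i < dim M \<Longrightarrow> runiv M ! i = nalg.top (alg M i)"
  and length_rinter [simp]: "length (rinter M R R') = dim M"
  and length_rcomp [simp]: "length (rcomp M R R') = dim M"
  and length_rconv [simp]: "length (rconv M R) = dim M"
  and length_runiv [simp]: "length (runiv M) = dim M"
  by (simp_all add: rinter_def rcomp_def rconv_def runiv_def)

definition rweight :: "'r malg \<Rightarrow> 'r list \<Rightarrow> nat" where
  "rweight M R = (\<Sum>i<dim M. card (down_set (alg M i) (R ! i)))"

context
  fixes M :: "'r malg"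
  assumes MA: "multi_alg M"
begin

lemma multi_alg_nonassoc: "i < dim M \<Longrightarrow> nonassoc_alg (alg M i)"
  and proj_carrier: "i < dim M \<Longrightarrow> j < dim M \<Longrightarrow> i \<noteq> j \<Longrightarrow> x \<in> carrier (alg M i) \<Longrightarrow>
    proj M i j x \<in> carrier (alg M j)"
  and proj_conv: "i < dim M \<Longrightarrow> j < dim M \<Longrightarrow> i \<noteq> j \<Longrightarrow> x \<in> carrier (alg M i) \<Longrightarrow>
    proj M i j (conv (alg M i) x) = conv (alg M j) (proj M i j x)"
  using MA unfolding multi_alg_def by blast+

lemma multi_alg_boolean: "i < dim M \<Longrightarrow> boolean_alg (alg M i)"
  by (rule na_boolean_alg[OF multi_alg_nonassoc])

lemma rinter_rels: "R \<in> rels M \<Longrightarrow> R' \<in> rels M \<Longrightarrow> rinter M R R' \<in> rels M"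
  by (rule relsI) (simp_all add: ba_meet_closed multi_alg_boolean relsD)

lemma rcomp_rels: "R \<in> rels M \<Longrightarrow> R' \<in> rels M \<Longrightarrow> rcomp M R R' \<in> rels M"
  by (rule relsI) (simp_all add: na_comp_closed multi_alg_nonassoc relsD)

lemma rconv_rels: "R \<in> rels M \<Longrightarrow> rconv M R \<in> rels M"
  by (rule relsI) (simp_all add: na_conv_closed multi_alg_nonassoc relsD)

lemma runiv_rels: "runiv M \<in> rels M"
  by (rule relsI) (simp_all add: ba_top_closed multi_alg_boolean)

lemma rconv_rconv: "R \<in> rels M \<Longrightarrow> rconv M (rconv M R) = R"
  by (rule rels_eqI[where M = M]) (simp_all add: rconv_rels na_conv_conv multi_alg_nonassoc relsD)

lemma rconv_rinter: "R \<in> rels M \<Longrightarrow> R' \<in> rels M \<Longrightarrow>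
    rconv M (rinter M R R') = rinter M (rconv M R) (rconv M R')"
  by (rule rels_eqI[where M = M])
    (simp_all add: rconv_rels rinter_rels na_conv_meet multi_alg_nonassoc relsD)

lemma rconv_rcomp: "R \<in> rels M \<Longrightarrow> R' \<in> rels M \<Longrightarrow>
    rconv M (rcomp M R R') = rcomp M (rconv M R') (rconv M R)"
  by (rule rels_eqI[where M = M])
    (simp_all add: rconv_rels rcomp_rels na_conv_comp multi_alg_nonassoc relsD)

lemma rinter_commute: "R \<in> rels M \<Longrightarrow> R' \<in> rels M \<Longrightarrow> rinter M R R' = rinter M R' R"
  by (rule rels_eqI[where M = M])
    (simp_all add: rinter_rels ba_meet_commute multi_alg_boolean relsD)

lemma rinter_eq_left_iff: "R \<in> rels M \<Longrightarrow> R' \<in> rels M \<Longrightarrow> rinter M R R' = R \<longleftrightarrow> rsubseteq M R R'"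
  unfolding rsubseteq_def
  by (metis rels_eqI rinter_nth rinter_rels ba_le_iff_meet multi_alg_boolean relsD(2))

lemma rinter_subseteq_left: "R \<in> rels M \<Longrightarrow> R' \<in> rels M \<Longrightarrow> rsubseteq M (rinter M R R') R"
  unfolding rsubseteq_def by (simp add: ba_meet_le1 multi_alg_boolean relsD)

lemma rsubseteq_refl: "R \<in> rels M \<Longrightarrow> rsubseteq M R R"
  unfolding rsubseteq_def by (simp add: ba_le_refl multi_alg_boolean relsD)

lemma rsubseteq_trans: "R1 \<in> rels M \<Longrightarrow> R2 \<in> rels M \<Longrightarrow> R3 \<in> rels M \<Longrightarrow>
    rsubseteq M R1 R2 \<Longrightarrow> rsubseteq M R2 R3 \<Longrightarrow> rsubseteq M R1 R3"
  unfolding rsubseteq_def by (meson ba_le_trans multi_alg_boolean relsD(2))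

lemma rsubseteq_runiv: "R \<in> rels M \<Longrightarrow> rsubseteq M R (runiv M)"
  unfolding rsubseteq_def by (simp add: ba_le_top multi_alg_boolean relsD)

lemma rconv_mono: "R \<in> rels M \<Longrightarrow> R' \<in> rels M \<Longrightarrow> rsubseteq M R R' \<Longrightarrow>
    rsubseteq M (rconv M R) (rconv M R')"
  unfolding rsubseteq_def by (simp add: na_conv_mono multi_alg_nonassoc relsD)

lemma rweight_mono:
  assumes "R \<in> rels M" "R' \<in> rels M" "rsubseteq M R' R"
  shows "rweight M R' \<le> rweight M R"
  using assms unfolding rweight_def rsubseteq_def
  by (intro sum_mono) (simp add: ba_card_down_set_mono multi_alg_boolean relsD)

lemma rweight_strict_mono:
  assumes R: "R \<in> rels M" and R': "R' \<in> rels M" and sub: "rsubseteq M R' R" and "R' \<noteq> R"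
  shows "rweight M R' < rweight M R"
  unfolding rweight_def
proof (rule sum_strict_mono_ex1)
  show "\<forall>i \<in> {..<dim M}. card (down_set (alg M i) (R' ! i)) \<le> card (down_set (alg M i) (R ! i))"
    using R R' sub unfolding rsubseteq_def
    by (simp add: ba_card_down_set_mono multi_alg_boolean relsD)
  obtain i where "i < dim M" "R' ! i \<noteq> R ! i"
    using rels_eqI[OF R' R] \<open>R' \<noteq> R\<close> by blast
  then show
    "\<exists>i \<in> {..<dim M}. card (down_set (alg M i) (R' ! i)) < card (down_set (alg M i) (R ! i))"
    using R R' sub unfolding rsubseteq_def
    by (auto intro!: bexI[of _ i] ba_card_down_set_strict_mono multi_alg_boolean relsD)
qed simp

lemma proj_step_rels:
  assumes "R \<in> rels M" "proj_step M R R'"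
  shows "R' \<in> rels M" "rsubseteq M R' R" "proj_step M (rconv M R) (rconv M R')"
proof -
  obtain i j where ij: "i < dim M" "j < dim M" "i \<noteq> j"
    and R': "R' = R[j := meet (alg M j) (R ! j) (proj M i j (R ! i))]"
    using assms(2) unfolding proj_step_def by blast
  have len: "length R = dim M"
    and Ri: "R ! i \<in> carrier (alg M i)" and Rj: "R ! j \<in> carrier (alg M j)"
    using assms(1) ij by (simp_all add: relsD)
  have p: "proj M i j (R ! i) \<in> carrier (alg M j)"
    using proj_carrier[OF ij Ri] .
  note BAj = multi_alg_boolean[OF ij(2)]
  show "R' \<in> rels M"
    using assms(1) ij(2) len ba_meet_closed[OF BAj Rj p] unfolding R'
    by (intro relsI) (auto simp: nth_list_update relsD)
  show "rsubseteq M R' R"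
    using assms(1) ij(2) len ba_meet_le1[OF BAj Rj p] unfolding R' rsubseteq_def
    by (auto simp: nth_list_update ba_le_refl multi_alg_boolean relsD)
  have "rconv M R' = (rconv M R)[j := meet (alg M j) (rconv M R ! j) (proj M i j (rconv M R ! i))]"
    using ij len Ri Rj p unfolding R'
    by (intro nth_equalityI)
      (auto simp: nth_list_update na_conv_meet multi_alg_nonassoc proj_conv)
  then show "proj_step M (rconv M R) (rconv M R')"
    unfolding proj_step_def using ij by blast
qed

lemma proj_steps_rels:
  assumes "R \<in> rels M" "(proj_step M)\<^sup>*\<^sup>* R R'"
  shows "R' \<in> rels M \<and> rsubseteq M R' R \<and> (proj_step M)\<^sup>*\<^sup>* (rconv M R) (rconv M R')"
  using assms(2)
proof (induction rule: rtranclp_induct)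
  case base
  show ?case using assms(1) rsubseteq_refl by simp
next
  case (step R1 R2)
  then show ?case
    using proj_step_rels[of R1 R2] rsubseteq_trans[of R2 R1 R] assms(1)
    by (meson rtranclp.rtrancl_into_rtrancl)
qed

lemma proj_closed_rconv:
  assumes "R \<in> rels M" "proj_closed M R"
  shows "proj_closed M (rconv M R)"
  using assms unfolding proj_closed_def
  by (simp add: na_conv_mono multi_alg_nonassoc proj_carrier proj_conv relsD)

lemma proj_closure_rels:
  assumes "R \<in> rels M" "proj_closure M R R'"
  shows "R' \<in> rels M" "rsubseteq M R' R" "proj_closure M (rconv M R) (rconv M R')"
  using assms proj_steps_rels proj_closed_rconv unfolding proj_closure_def by blast+

lemma proj_closure_exists:
  assumes "R \<in> rels M"
  shows "\<exists>R'. proj_closure M R R'"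
proof -
  have "\<exists>R'. proj_step M R R' \<and> R' \<in> rels M \<and> rweight M R' < rweight M R"
    if R: "R \<in> rels M" and not_closed: "\<not> proj_closed M R" for R
  proof -
    obtain i j where ij: "i < dim M" "j < dim M" "i \<noteq> j"
      and not_le: "\<not> le (alg M j) (R ! j) (proj M i j (R ! i))"
      using not_closed unfolding proj_closed_def by blast
    define R' where "R' = R[j := meet (alg M j) (R ! j) (proj M i j (R ! i))]"
    have step: "proj_step M R R'"
      unfolding proj_step_def R'_def using ij by blast
    have "meet (alg M j) (R ! j) (proj M i j (R ! i)) \<noteq> R ! j"
      using not_le ba_le_iff_meet[OF multi_alg_boolean[OF ij(2)]] proj_carrier[OF ij] R ij
      by (simp add: relsD)
    then have "R' \<noteq> R"
      unfolding R'_def using R ij(2) by (metis nth_list_update_eq relsD(1))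
    then show ?thesis
      using step proj_step_rels[OF R step] rweight_strict_mono R by blast
  qed
  then show ?thesis
    using rtranclp_final_exists_by_measure[of "\<lambda>R. R \<in> rels M" R "proj_closed M"] assms
    unfolding proj_closure_def by blast
qed

end

context
  fixes M :: "'r malg" and U :: "'u set" and \<phi> :: "'r list \<Rightarrow> ('u \<times> 'u) set"
  assumes F: "seq_formalism M U \<phi>"
begin

lemma seq_formalism_multi_alg: "multi_alg M"
  and phi_proj_closure: "R \<in> rels M \<Longrightarrow> proj_closure M R R' \<Longrightarrow> \<phi> R' = \<phi> R"
  and phi_rconv: "R \<in> rels M \<Longrightarrow> \<phi> (rconv M R) = (\<phi> R)\<inverse>"
  and phi_rcomp: "R \<in> rels M \<Longrightarrow> R' \<in> rels M \<Longrightarrow> (\<phi> R O \<phi> R') \<inter> \<phi> (runiv M) \<subseteq> \<phi> (rcomp M R R')"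
  and phi_rinter: "R \<in> rels M \<Longrightarrow> R' \<in> rels M \<Longrightarrow> \<phi> (rinter M R R') = \<phi> R \<inter> \<phi> R'"
  and phi_basic: "R \<in> rels M \<Longrightarrow> \<phi> R = (\<Union>B \<in> {B. rbasic M B \<and> rsubseteq M B R}. \<phi> B)"
  using F unfolding seq_formalism_def by metis+

lemma phi_mono: "R \<in> rels M \<Longrightarrow> R' \<in> rels M \<Longrightarrow> rsubseteq M R R' \<Longrightarrow> \<phi> R \<subseteq> \<phi> R'"
  by (metis Int_lower2 phi_rinter rinter_commute rinter_eq_left_iff seq_formalism_multi_alg)

lemma phi_rtriv:
  assumes R: "R \<in> rels M" and "rtriv M R"
  shows "\<phi> R = {}"
proof -
  obtain i where i: "i < dim M" "R ! i = nalg.bot (alg M i)"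
    using \<open>rtriv M R\<close> unfolding rtriv_def by blast
  have "\<not> rsubseteq M B R" if "rbasic M B" for B
  proof
    assume "rsubseteq M B R"
    then have "le (alg M i) (B ! i) (nalg.bot (alg M i))"
      using i unfolding rsubseteq_def by metis
    then show False
      using \<open>rbasic M B\<close> i(1) ba_le_bot_iff[OF multi_alg_boolean[OF seq_formalism_multi_alg]]
      unfolding rbasic_def is_atom_def by blast
  qed
  then show ?thesis
    using phi_basic[OF R] by blast
qed

end

lemma network_overD:
  assumes "network_over M T E N" "a \<in> E" "b \<in> E" "a \<noteq> b"
  shows "N a b \<in> T" "N b a = rconv M (N a b)"
  using assms unfolding network_over_def by blast+

lemma network_over_mono: "network_over M T E N \<Longrightarrow> T \<subseteq> T' \<Longrightarrow> network_over M T' E N"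
  unfolding network_over_def by blast

lemma upd_net_same: "x \<noteq> z \<Longrightarrow> upd_net M N x z R x z = R"
  and upd_net_swap: "x \<noteq> z \<Longrightarrow> upd_net M N x z R z x = rconv M R"
  by (simp_all add: upd_net_def)

lemma upd_net_other: "\<not> (a = x \<and> b = z) \<Longrightarrow> \<not> (a = z \<and> b = x) \<Longrightarrow> upd_net M N x z R a b = N a b"
  unfolding upd_net_def by (intro trans[OF if_not_P if_not_P])

lemma upd_net_cases:
  assumes "x \<noteq> z"
  obtains "a = x" "b = z" "upd_net M N x z R a b = R" "upd_net M N x z R b a = rconv M R"
  | "a = z" "b = x" "upd_net M N x z R a b = rconv M R" "upd_net M N x z R b a = R"
  | "upd_net M N x z R a b = N a b" "upd_net M N x z R b a = N b a"
  using assms upd_net_same upd_net_swap upd_net_other by metis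

lemma network_over_upd_net:
  assumes MA: "multi_alg M" and T: "T \<subseteq> rels M" and N: "network_over M T E N"
    and xz: "x \<in> E" "z \<in> E" "x \<noteq> z" and R: "R \<in> T" "rconv M R \<in> T"
  shows "network_over M T E (upd_net M N x z R)"
  unfolding network_over_def
proof (intro conjI ballI impI)
  show "finite E" using N unfolding network_over_def by blast
  fix a b assume ab: "a \<in> E" "b \<in> E" "a \<noteq> b"
  have "rconv M (rconv M R) = R"
    using R(1) T by (simp add: rconv_rconv[OF MA] subset_iff)
  then show "upd_net M N x z R a b \<in> T" "upd_net M N x z R b a = rconv M (upd_net M N x z R a b)"
    using network_overD[OF N ab] R by (cases rule: upd_net_cases[OF xz(3), of a b M N R]; simp)+
qed

definition net_subseteq ::
    "'r malg \<Rightarrow> 'v set \<Rightarrow> ('v \<Rightarrow> 'v \<Rightarrow> 'r list) \<Rightarrow> ('v \<Rightarrow> 'v \<Rightarrow> 'r list) \<Rightarrow> bool" where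
  "net_subseteq M E N' N \<longleftrightarrow> (\<forall>a \<in> E. \<forall>b \<in> E. a \<noteq> b \<longrightarrow> rsubseteq M (N' a b) (N a b))"

lemma net_subseteq_upd_net:
  assumes "multi_alg M" "network_over M (rels M) E N" "x \<in> E" "z \<in> E" "x \<noteq> z"
    and "R \<in> rels M" "rsubseteq M R (N x z)"
  shows "net_subseteq M E (upd_net M N x z R) N"
  unfolding net_subseteq_def
proof (intro ballI impI)
  fix a b assume ab: "a \<in> E" "b \<in> E" "a \<noteq> b"
  have "rsubseteq M (rconv M R) (N z x)"
    using rconv_mono[OF assms(1,6) _ assms(7)] network_overD[OF assms(2-5)] by simp
  then show "rsubseteq M (upd_net M N x z R a b) (N a b)"
    using assms(7) rsubseteq_refl[OF assms(1) network_overD(1)[OF assms(2) ab]]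
    by (cases rule: upd_net_cases[OF assms(5), of a b M N R]) simp_all
qed

lemma solution_mono:
  assumes "seq_formalism M U \<phi>" "network_over M (rels M) E N'" "network_over M (rels M) E N"
    and "net_subseteq M E N' N" "solution \<phi> U E N' u"
  shows "solution \<phi> U E N u"
  unfolding solution_def
proof (intro conjI ballI impI)
  fix a b assume ab: "a \<in> E" "b \<in> E" "a \<noteq> b"
  have "\<phi> (N' a b) \<subseteq> \<phi> (N a b)"
    using phi_mono[OF assms(1) network_overD(1)[OF assms(2) ab] network_overD(1)[OF assms(3) ab]]
      assms(4) ab unfolding net_subseteq_def by blast
  then show "(u a, u b) \<in> \<phi> (N a b)"
    using assms(5) ab unfolding solution_def by blast
qed (use assms(5) in \<open>simp add: solution_def\<close>)

lemma solution_upd_net: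
  assumes F: "seq_formalism M U \<phi>" and "x \<noteq> z" "R \<in> rels M"
    and u: "solution \<phi> U E N u" and uxz: "(u x, u z) \<in> \<phi> R"
  shows "solution \<phi> U E (upd_net M N x z R) u"
  unfolding solution_def
proof (intro conjI ballI impI)
  fix a b assume ab: "a \<in> E" "b \<in> E" "a \<noteq> b"
  have "(u z, u x) \<in> \<phi> (rconv M R)"
    using uxz phi_rconv[OF F \<open>R \<in> rels M\<close>] by simp
  then show "(u a, u b) \<in> \<phi> (upd_net M N x z R a b)"
    using u ab uxz unfolding solution_def
    by (cases rule: upd_net_cases[OF \<open>x \<noteq> z\<close>, of a b M N R]) simp_all
qed (use u in \<open>simp add: solution_def\<close>)

lemma alg_stepE:
  assumes "alg_step M E N N'"
  obtains (proj) x z R where "x \<in> E" "z \<in> E" "x \<noteq> z" "proj_closure M (N x z) R"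
    "N' = upd_net M N x z R"
  | (comp) x y z where "x \<in> E" "y \<in> E" "z \<in> E" "x \<noteq> y" "y \<noteq> z" "x \<noteq> z"
    "N' = upd_net M N x z (rinter M (N x z) (rcomp M (N x y) (N y z)))"
  using assms unfolding alg_step_def by blast

lemma rels_projection_closed: "multi_alg M \<Longrightarrow> projection_closed_set M (rels M)"
  unfolding projection_closed_set_def using proj_closure_rels(1) by blast

lemma rels_compinter_closed: "multi_alg M \<Longrightarrow> compinter_closed M (rels M)"
  unfolding compinter_closed_def by (simp add: rinter_rels rcomp_rels)

lemma alg_step_network_over:
  assumes MA: "multi_alg M" and T: "T \<subseteq> rels M" "projection_closed_set M T" "compinter_closed M T"
    and N: "network_over M T E N" and step: "alg_step M E N N'"
  shows "network_over M T E N'"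
  using step
proof (cases rule: alg_stepE)
  case (proj x z R)
  have "N x z \<in> T" "N z x = rconv M (N x z)" "N z x \<in> T"
    using network_overD[OF N proj(1-3)] network_overD(1)[OF N proj(2,1)] proj(3) by auto
  moreover have "proj_closure M (N z x) (rconv M R)"
    using proj_closure_rels(3)[OF MA _ proj(4)] T(1) \<open>N x z \<in> T\<close> \<open>N z x = rconv M (N x z)\<close> by auto
  ultimately have "R \<in> T" "rconv M R \<in> T"
    using T(2) proj(4) unfolding projection_closed_set_def by blast+
  then show ?thesis
    using network_over_upd_net[OF MA T(1) N proj(1-3)] proj(5) by simp
next
  case (comp x y z)
  have inT: "N x y \<in> T" "N y z \<in> T" "N x z \<in> T" "N z y \<in> T" "N y x \<in> T" "N z x \<in> T"
    using network_overD(1)[OF N] comp(1-6) by simp_all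
  then have inR: "N x y \<in> rels M" "N y z \<in> rels M" "N x z \<in> rels M"
      "N z y \<in> rels M" "N y x \<in> rels M" "N z x \<in> rels M"
    using T(1) by blast+
  have conv: "N y x = rconv M (N x y)" "N z y = rconv M (N y z)" "N z x = rconv M (N x z)"
    using network_overD(2)[OF N comp(1,2,4)] network_overD(2)[OF N comp(2,3,5)]
      network_overD(2)[OF N comp(1,3,6)] by simp_all
  have closed: "rinter M (rcomp M A B) C \<in> T" if "A \<in> T" "B \<in> T" "C \<in> T" for A B C
    using T(3) that unfolding compinter_closed_def by blast
  let ?R = "rinter M (N x z) (rcomp M (N x y) (N y z))"
  have "?R = rinter M (rcomp M (N x y) (N y z)) (N x z)"
    by (rule rinter_commute[OF MA inR(3) rcomp_rels[OF MA inR(1,2)]])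
  then have R: "?R \<in> T"
    using closed[OF inT(1-3)] by simp
  have "rconv M ?R = rinter M (N z x) (rcomp M (N z y) (N y x))"
    unfolding conv
    using rconv_rinter[OF MA inR(3) rcomp_rels[OF MA inR(1,2)]] rconv_rcomp[OF MA inR(1,2)] by simp
  also have "\<dots> = rinter M (rcomp M (N z y) (N y x)) (N z x)"
    by (rule rinter_commute[OF MA inR(6) rcomp_rels[OF MA inR(4,5)]])
  finally have "rconv M ?R \<in> T"
    using closed[OF inT(4-6)] by simp
  then show ?thesis
    using network_over_upd_net[OF MA T(1) N comp(1,3,6) R] comp(7) by simp
qed

lemma alg_steps_network_over:
  assumes "multi_alg M" "T \<subseteq> rels M" "projection_closed_set M T" "compinter_closed M T"
    and "network_over M T E N" "(alg_step M E)\<^sup>*\<^sup>* N N'"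
  shows "network_over M T E N'"
  using assms(6,5) by induction (auto intro: alg_step_network_over[OF assms(1-4)])

lemma alg_step_network_over_rels:
  "multi_alg M \<Longrightarrow> network_over M (rels M) E N \<Longrightarrow> alg_step M E N N' \<Longrightarrow> network_over M (rels M) E N'"
  by (rule alg_step_network_over[OF _ subset_refl rels_projection_closed rels_compinter_closed])

lemma alg_steps_network_over_rels:
  "multi_alg M \<Longrightarrow> network_over M (rels M) E N \<Longrightarrow> (alg_step M E)\<^sup>*\<^sup>* N N' \<Longrightarrow>
    network_over M (rels M) E N'"
  by (rule alg_steps_network_over[OF _ subset_refl rels_projection_closed rels_compinter_closed])

lemma alg_step_net_subseteq:
  assumes MA: "multi_alg M" and N: "network_over M (rels M) E N" and step: "alg_step M E N N'"
  shows "net_subseteq M E N' N"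
  using step
proof (cases rule: alg_stepE)
  case (proj x z R)
  then show ?thesis
    using net_subseteq_upd_net[OF MA N proj(1-3)]
      proj_closure_rels[OF MA network_overD(1)[OF N proj(1-3)]] by simp
next
  case (comp x y z)
  have "N x z \<in> rels M" "rcomp M (N x y) (N y z) \<in> rels M"
    using network_overD(1)[OF N] rcomp_rels[OF MA] comp(1-6) by simp_all
  then show ?thesis
    using net_subseteq_upd_net[OF MA N comp(1,3,6)] rinter_rels[OF MA] rinter_subseteq_left[OF MA]
      comp(7) by simp
qed

lemma alg_step_solution_iff:
  assumes F: "seq_formalism M U \<phi>" and N: "network_over M (rels M) E N"
    and step: "alg_step M E N N'"
  shows "solution \<phi> U E N u \<longleftrightarrow> solution \<phi> U E N' u"
proof
  note MA = seq_formalism_multi_alg[OF F]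
  assume u: "solution \<phi> U E N u"
  have u_pair: "(u a, u b) \<in> \<phi> (N a b)" if "a \<in> E" "b \<in> E" "a \<noteq> b" for a b
    using u that unfolding solution_def by blast
  from step show "solution \<phi> U E N' u"
  proof (cases rule: alg_stepE)
    case (proj x z R)
    then have "(u x, u z) \<in> \<phi> R"
      using phi_proj_closure[OF F network_overD(1)[OF N proj(1-3)]] u_pair by simp
    then show ?thesis
      using solution_upd_net[OF F proj(3) _ u] proj
        proj_closure_rels(1)[OF MA network_overD(1)[OF N proj(1-3)]] by simp
  next
    case (comp x y z)
    have rels: "N x z \<in> rels M" "N x y \<in> rels M" "N y z \<in> rels M"
      using network_overD(1)[OF N] comp(1-6) by simp_all
    have "(u x, u z) \<in> \<phi> (runiv M)"
      using phi_mono[OF F rels(1) runiv_rels[OF MA] rsubseteq_runiv[OF MA rels(1)]] u_pair comp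
      by blast
    then have "(u x, u z) \<in> \<phi> (rcomp M (N x y) (N y z))"
      using phi_rcomp[OF F rels(2,3)] u_pair comp by blast
    then have "(u x, u z) \<in> \<phi> (rinter M (N x z) (rcomp M (N x y) (N y z)))"
      using phi_rinter[OF F rels(1) rcomp_rels[OF MA rels(2,3)]] u_pair comp by blast
    then show ?thesis
      using solution_upd_net[OF F comp(6) _ u] rinter_rels[OF MA rels(1) rcomp_rels[OF MA rels(2,3)]]
        comp(7) by simp
  qed
next
  note MA = seq_formalism_multi_alg[OF F]
  assume "solution \<phi> U E N' u"
  then show "solution \<phi> U E N u"
    by (rule solution_mono[OF F alg_step_network_over_rels[OF MA N step] N
          alg_step_net_subseteq[OF MA N step]])
qed

lemma alg_steps_solution_iff:
  assumes F: "seq_formalism M U \<phi>" and N: "network_over M (rels M) E N"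
    and steps: "(alg_step M E)\<^sup>*\<^sup>* N N'"
  shows "solution \<phi> U E N u \<longleftrightarrow> solution \<phi> U E N' u"
  using steps
proof (induction rule: rtranclp_induct)
  case (step N1 N2)
  note MA = seq_formalism_multi_alg[OF F]
  have "network_over M (rels M) E N1"
    using alg_steps_network_over_rels[OF MA N step(1)] .
  then show ?case
    using step alg_step_solution_iff[OF F] by blast
qed simp

definition net_weight :: "'r malg \<Rightarrow> 'v set \<Rightarrow> ('v \<Rightarrow> 'v \<Rightarrow> 'r list) \<Rightarrow> nat" where
  "net_weight M E N = (\<Sum>(a, b) \<in> {(a, b) \<in> E \<times> E. a \<noteq> b}. rweight M (N a b))"

lemma net_weight_strict_mono:
  assumes MA: "multi_alg M"
    and N': "network_over M (rels M) E N'" and N: "network_over M (rels M) E N"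
    and sub: "net_subseteq M E N' N" and xz: "x \<in> E" "z \<in> E" "x \<noteq> z" and ne: "N' x z \<noteq> N x z"
  shows "net_weight M E N' < net_weight M E N"
  unfolding net_weight_def
proof (rule sum_strict_mono_ex1)
  have "finite E"
    using N unfolding network_over_def by blast
  then show "finite {(a, b) \<in> E \<times> E. a \<noteq> b}"
    by (auto intro: finite_subset[of _ "E \<times> E"])
  have weight_le: "rweight M (N' a b) \<le> rweight M (N a b)" if "a \<in> E" "b \<in> E" "a \<noteq> b" for a b
    using rweight_mono[OF MA network_overD(1)[OF N that] network_overD(1)[OF N' that]] sub that
    unfolding net_subseteq_def by blast
  then show "\<forall>p \<in> {(a, b) \<in> E \<times> E. a \<noteq> b}.
      (case p of (a, b) \<Rightarrow> rweight M (N' a b)) \<le> (case p of (a, b) \<Rightarrow> rweight M (N a b))"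
    by auto
  have "rweight M (N' x z) < rweight M (N x z)"
    using rweight_strict_mono[OF MA network_overD(1)[OF N xz] network_overD(1)[OF N' xz] _ ne]
      sub xz
    unfolding net_subseteq_def by blast
  then show "\<exists>p \<in> {(a, b) \<in> E \<times> E. a \<noteq> b}.
      (case p of (a, b) \<Rightarrow> rweight M (N' a b)) < (case p of (a, b) \<Rightarrow> rweight M (N a b))"
    using xz by auto
qed

lemma alg_step_exists_if_not_closed:
  assumes MA: "multi_alg M" and N: "network_over M (rels M) E N"
    and not_closed: "\<not> alg_closed M E N"
  shows "\<exists>N' x z. alg_step M E N N' \<and> x \<in> E \<and> z \<in> E \<and> x \<noteq> z \<and> N' x z \<noteq> N x z"
proof (cases "proj_closed_net M E N")
  case False
  then obtain x z where xz: "x \<in> E" "z \<in> E" "x \<noteq> z" and "\<not> proj_closed M (N x z)"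
    unfolding proj_closed_net_def by blast
  obtain R where R: "proj_closure M (N x z) R"
    using proj_closure_exists[OF MA network_overD(1)[OF N xz]] by blast
  then have "R \<noteq> N x z"
    using \<open>\<not> proj_closed M (N x z)\<close> unfolding proj_closure_def by blast
  moreover have "alg_step M E N (upd_net M N x z R)"
    unfolding alg_step_def using xz R by blast
  ultimately show ?thesis
    using xz upd_net_same by metis
next
  case True
  with not_closed obtain x y z where xyz: "x \<in> E" "y \<in> E" "z \<in> E" "x \<noteq> y" "y \<noteq> z" "x \<noteq> z"
    and not_sub: "\<not> rsubseteq M (N x z) (rcomp M (N x y) (N y z))"
    unfolding alg_closed_def comp_closed_net_def by blast
  let ?R = "rinter M (N x z) (rcomp M (N x y) (N y z))"
  have "?R \<noteq> N x z"
    using not_sub rinter_eq_left_iff[OF MA network_overD(1)[OF N xyz(1,3,6)]]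
      rcomp_rels[OF MA network_overD(1)[OF N xyz(1,2,4)] network_overD(1)[OF N xyz(2,3,5)]] by blast
  moreover have "alg_step M E N (upd_net M N x z ?R)"
    unfolding alg_step_def using xyz by blast
  ultimately show ?thesis
    using xyz upd_net_same by metis
qed

lemma alg_closure_exists:
  assumes MA: "multi_alg M" and T: "T \<subseteq> rels M" "projection_closed_set M T" "compinter_closed M T"
    and N: "network_over M T E N"
  shows "\<exists>N'. alg_closure M E N N' \<and> network_over M T E N'"
proof -
  have "\<exists>N'. alg_step M E N N' \<and> network_over M T E N' \<and> net_weight M E N' < net_weight M E N"
    if N: "network_over M T E N" and not_closed: "\<not> alg_closed M E N" for N
  proof -
    have Nr: "network_over M (rels M) E N"
      using network_over_mono[OF N T(1)] .
    obtain N' x z where step: "alg_step M E N N'" and xz: "x \<in> E" "z \<in> E" "x \<noteq> z"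
      and ne: "N' x z \<noteq> N x z"
      using alg_step_exists_if_not_closed[OF MA Nr not_closed] by blast
    have N': "network_over M T E N'"
      using alg_step_network_over[OF MA T N step] .
    have "net_weight M E N' < net_weight M E N"
      using net_weight_strict_mono[OF MA network_over_mono[OF N' T(1)] Nr
          alg_step_net_subseteq[OF MA Nr step] xz ne] .
    with step N' show ?thesis by blast
  qed
  then show ?thesis
    using rtranclp_final_exists_by_measure[of "network_over M T E" N "alg_closed M E"] N
    unfolding alg_closure_def by blast
qed

lemma alg_tractable_if_consistent_satisfiable:
  assumes F: "seq_formalism M U \<phi>"
    and S: "S \<subseteq> rels M" "projection_closed_set M S" "compinter_closed M S"
    and consistent_sat: "\<And>(E :: 'v set) N. network_over M S E N \<Longrightarrow> alg_consistent M E N \<Longrightarrow>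
      satisfiable \<phi> U E N"
  shows "alg_tractable M U \<phi> S TYPE('v)"
  unfolding alg_tractable_def
proof (intro allI impI)
  fix E :: "'v set" and N
  assume N: "network_over M S E N"
  note MA = seq_formalism_multi_alg[OF F]
  have Nr: "network_over M (rels M) E N"
    using network_over_mono[OF N S(1)] .
  show "satisfiable \<phi> U E N \<longleftrightarrow> (\<forall>N'. alg_closure M E N N' \<longrightarrow> \<not> triv_incons M E N')"
  proof (intro iffI allI impI notI)
    fix N'
    assume "satisfiable \<phi> U E N" and closure: "alg_closure M E N N'" and "triv_incons M E N'"
    then obtain u x y where u: "solution \<phi> U E N u" and xy: "x \<in> E" "y \<in> E" "x \<noteq> y"
      and triv: "rtriv M (N' x y)"
      unfolding satisfiable_def triv_incons_def by blast
    have steps: "(alg_step M E)\<^sup>*\<^sup>* N N'"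
      using closure unfolding alg_closure_def by blast
    have "network_over M (rels M) E N'"
      using alg_steps_network_over_rels[OF MA Nr steps] .
    then have "\<phi> (N' x y) = {}"
      using phi_rtriv[OF F _ triv] network_overD(1)[OF _ xy] by blast
    moreover have "(u x, u y) \<in> \<phi> (N' x y)"
      using alg_steps_solution_iff[OF F Nr steps] u xy unfolding solution_def by blast
    ultimately show False by blast
  next
    assume closure_consistent: "\<forall>N'. alg_closure M E N N' \<longrightarrow> \<not> triv_incons M E N'"
    obtain N' where closure: "alg_closure M E N N'" and N': "network_over M S E N'"
      using alg_closure_exists[OF MA S N] by blast
    have "alg_consistent M E N'"
      using closure_consistent closure network_over_mono[OF N' S(1)]
      unfolding alg_consistent_def network_def alg_closure_def by blast
    then obtain u where "solution \<phi> U E N' u"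
      using consistent_sat[OF N'] unfolding satisfiable_def by blast
    then show "satisfiable \<phi> U E N"
      using alg_steps_solution_iff[OF F Nr] closure
      unfolding satisfiable_def alg_closure_def by blast
  qed
qed

lemma satisfiable_apply_ref:
  assumes F: "seq_formalism M U \<phi>" and "S \<subseteq> rels M" and H: "refinement M S S' H"
    and N: "network_over M S E N" and HN: "network_over M (rels M) E (apply_ref H N)"
    and sat: "satisfiable \<phi> U E (apply_ref H N)"
  shows "satisfiable \<phi> U E N"
proof -
  have "net_subseteq M E (apply_ref H N) N"
    using H network_overD(1)[OF N] unfolding net_subseteq_def refinement_def apply_ref_def by blast
  then show ?thesis
    using solution_mono[OF F HN network_over_mono[OF N \<open>S \<subseteq> rels M\<close>]] sat
    unfolding satisfiable_def by blast
qed

theorem mainTheorem2: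
  fixes M :: "'r malg" and U :: "'u set" and \<phi> :: "'r list \<Rightarrow> ('u \<times> 'u) set"
    and S S' :: "'r list set" and H :: "'r list \<Rightarrow> 'r list"
  assumes F: "seq_formalism M U \<phi>"
    and S_sub: "S \<subseteq> rels M" and S'_sub: "S' \<subseteq> rels M"
    and H: "refinement M S S' H"
    and A1: "alg_stable M S H TYPE('v)"
    and A2: "\<forall>(E :: 'v set) N. network_over M S' E N \<and> alg_consistent M E N \<longrightarrow> satisfiable \<phi> U E N"
  shows "(\<forall>(E :: 'v set) N. network_over M S E N \<and> alg_consistent M E N \<longrightarrow> satisfiable \<phi> U E N)
         \<and> (projection_closed_set M S \<and> compinter_closed M S \<longrightarrow> alg_tractable M U \<phi> S TYPE('v))"
proof -
  have consistent_sat: "satisfiable \<phi> U E N"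
    if N: "network_over M S E N" and "alg_consistent M E N" for E :: "'v set" and N
  proof -
    have HN: "alg_consistent M E (apply_ref H N)"
      using A1 N \<open>alg_consistent M E N\<close> unfolding alg_stable_def by blast
    then have HN_rels: "network_over M (rels M) E (apply_ref H N)"
      unfolding alg_consistent_def network_def by blast
    then have "network_over M S' E (apply_ref H N)"
      using H network_overD(1)[OF N]
      unfolding network_over_def refinement_def apply_ref_def by blast
    then have "satisfiable \<phi> U E (apply_ref H N)"
      using A2 HN by blast
    then show ?thesis
      by (rule satisfiable_apply_ref[OF F S_sub H N HN_rels])
  qed
  then show ?thesis
    using alg_tractable_if_consistent_satisfiable[OF F S_sub] by blast
qed

end
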